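(* Let $G$ be a connected graph of order $n\geq 9$ such that $d(u)+d(v)\geq n-2$ for every pair of non-adjacent vertices $u,v\in V(G)$. Then $prc(G)=\chi'(G)$.
   Context: A path in an edge-coloured graph is a rainbow path if its edges receive pairwise distinct colours. The proper rainbow connection number $prc(G)$ of a connected graph is the minimum number of colours in a proper edge-colouring (adjacent edges get distinct colours) such that every two distinct vertices are joined by a rainbow path. $\chi'(G)$ is the chromatic index; $d(u)$ is the degree of $u$. *)

theory Defs
  imports Main
begin

definition simple_graph :: "'a set \<Rightarrow> 'a set set \<Rightarrow> bool" where
  "simple_graph V E \<longleftrightarrow> finite V \<and> (\<forall>e\<in>E. e \<subseteq> V \<and> card e = 2)"

definition degree :: "'a set set \<Rightarrow> 'a \<Rightarrow> nat" where
  "degree E u = card {v. {u, v} \<in> E}"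

definition is_path :: "'a set \<Rightarrow> 'a set set \<Rightarrow> 'a list \<Rightarrow> bool" where
  "is_path V E p \<longleftrightarrow> p \<noteq> [] \<and> distinct p \<and> set p \<subseteq> V \<and>
     (\<forall>i. Suc i < length p \<longrightarrow> {p ! i, p ! Suc i} \<in> E)"

definition path_edges :: "'a list \<Rightarrow> 'a set list" where
  "path_edges p = map (\<lambda>i. {p ! i, p ! Suc i}) [0..<length p - 1]"

definition connected_graph :: "'a set \<Rightarrow> 'a set set \<Rightarrow> bool" where
  "connected_graph V E \<longleftrightarrow> V \<noteq> {} \<and>
     (\<forall>u\<in>V. \<forall>v\<in>V. \<exists>p. is_path V E p \<and> hd p = u \<and> last p = v)"

definition proper_edge_colouring :: "'a set set \<Rightarrow> ('a set \<Rightarrow> nat) \<Rightarrow> nat \<Rightarrow> bool" where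
  "proper_edge_colouring E c k \<longleftrightarrow> (\<forall>e\<in>E. c e < k) \<and>
     (\<forall>e\<in>E. \<forall>f\<in>E. e \<noteq> f \<and> e \<inter> f \<noteq> {} \<longrightarrow> c e \<noteq> c f)"

definition rainbow_path :: "'a set \<Rightarrow> 'a set set \<Rightarrow> ('a set \<Rightarrow> nat) \<Rightarrow> 'a list \<Rightarrow> bool" where
  "rainbow_path V E c p \<longleftrightarrow> is_path V E p \<and> distinct (map c (path_edges p))"

definition rainbow_connected :: "'a set \<Rightarrow> 'a set set \<Rightarrow> ('a set \<Rightarrow> nat) \<Rightarrow> bool" where
  "rainbow_connected V E c \<longleftrightarrow>
     (\<forall>u\<in>V. \<forall>v\<in>V. u \<noteq> v \<longrightarrow> (\<exists>p. rainbow_path V E c p \<and> hd p = u \<and> last p = v))"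

definition chromatic_index :: "'a set \<Rightarrow> 'a set set \<Rightarrow> nat" where
  "chromatic_index V E = (LEAST k. \<exists>c. proper_edge_colouring E c k)"

definition prc :: "'a set \<Rightarrow> 'a set set \<Rightarrow> nat" where
  "prc V E = (LEAST k. \<exists>c. proper_edge_colouring E c k \<and> rainbow_connected V E c)"

end

theory Submission
  imports Defs
begin

(* Every proper edge colouring is already rainbow connected, so both minima range over the
   same colourings. Suppose u, v are joined by no rainbow path. Then u, v are non-adjacent
   with disjoint neighbourhoods, and the degree condition forces N(u) and N(v) to partition
   the remaining n - 2 vertices. On a path u a b v with a in N(u), b in N(v) the first and
   last edges must share a colour. Connectivity gives an edge xy with x in N(u), y in N(v);
   then x has only one neighbour in N(v), namely y, and at most one in N(u), namely the a
   with c(ua) = c(xy) forced by the path u a x y v. Hence deg x <= 3, symmetrically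
   deg y <= 3, and the degree condition for the pairs x, v and u, y gives
   2(n - 2) <= 6 + (n - 2), i.e. n <= 8. *)

lemma length_path_edges [simp]: "length (path_edges p) = length p - 1"
  by (simp add: path_edges_def)

lemma set_path_edges: "set (path_edges p) = {{p ! i, p ! Suc i} | i. Suc i < length p}"
  by (auto simp: path_edges_def)

lemma is_path_iff_path_edges:
  "is_path V E p \<longleftrightarrow> p \<noteq> [] \<and> distinct p \<and> set p \<subseteq> V \<and> set (path_edges p) \<subseteq> E"
  by (auto simp: is_path_def set_path_edges)

lemma path_edges_Cons_Cons: "path_edges (a # b # p) = {a, b} # path_edges (b # p)"
  unfolding path_edges_def
  by (simp add: upt_conv_Cons map_Suc_upt[symmetric] del: upt_Suc)

lemma path_edges_singleton: "path_edges [a] = []"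
  by (simp add: path_edges_def)

lemma path_edges_rev: "path_edges (rev p) = rev (path_edges p)"
proof (rule nth_equalityI)
  fix i assume "i < length (path_edges (rev p))"
  then have i: "Suc i < length p" by simp
  then have "length p - 1 - Suc i + 1 = length p - Suc i" by linarith
  with i show "path_edges (rev p) ! i = rev (path_edges p) ! i"
    by (auto simp: path_edges_def rev_nth insert_commute)
qed simp

lemma rainbow_path_rev: "rainbow_path V E c p \<Longrightarrow> rainbow_path V E c (rev p)"
  by (simp add: rainbow_path_def is_path_iff_path_edges path_edges_rev rev_map[symmetric])

lemma rainbow_free_sym:
  "\<nexists>p. rainbow_path V E c p \<and> hd p = u \<and> last p = v \<Longrightarrow>
   \<nexists>p. rainbow_path V E c p \<and> hd p = v \<and> last p = u"
  by (metis rainbow_path_rev hd_rev last_rev rev_is_Nil_conv rainbow_path_def is_path_def)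

lemma rainbow_path_singleton: "rainbow_path V E c [a] \<longleftrightarrow> a \<in> V"
  by (simp add: rainbow_path_def is_path_def path_edges_singleton)

lemma rainbow_path_Cons_Cons:
  "rainbow_path V E c (a # b # p) \<longleftrightarrow>
     a \<notin> set (b # p) \<and> a \<in> V \<and> {a, b} \<in> E \<and> c {a, b} \<notin> c ` set (path_edges (b # p)) \<and>
     rainbow_path V E c (b # p)"
  by (auto simp: rainbow_path_def is_path_iff_path_edges path_edges_Cons_Cons)

lemma path_edges_cross:
  "p \<noteq> [] \<Longrightarrow> hd p \<in> S \<Longrightarrow> last p \<notin> S \<Longrightarrow> \<exists>a b. a \<in> S \<and> b \<notin> S \<and> {a, b} \<in> set (path_edges p)"
proof (induction p rule: induct_list012)
  case (3 a b p)
  then show ?case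
    by (cases "b \<in> S") (fastforce simp: path_edges_Cons_Cons)+
qed simp_all

lemma connected_graph_cross_edge:
  assumes "connected_graph V E" "u \<in> V" "v \<in> V" "u \<in> S" "v \<notin> S"
  obtains a b where "a \<in> S" "b \<notin> S" "{a, b} \<in> E"
proof -
  obtain p where "is_path V E p" "hd p = u" "last p = v"
    using assms(1-3) unfolding connected_graph_def by blast
  then show ?thesis
    using that path_edges_cross[of p S] assms(4,5) by (auto simp: is_path_iff_path_edges)
qed

lemma simple_graph_edgeD: "simple_graph V E \<Longrightarrow> {a, b} \<in> E \<Longrightarrow> a \<in> V \<and> b \<in> V \<and> a \<noteq> b"
  unfolding simple_graph_def by (cases "a = b") auto

definition neighbours :: "'a set set \<Rightarrow> 'a \<Rightarrow> 'a set" where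
  "neighbours E u = {v. {u, v} \<in> E}"

lemma degree_eq_card_neighbours: "degree E u = card (neighbours E u)"
  by (simp add: degree_def neighbours_def)

lemma neighbours_subset: "simple_graph V E \<Longrightarrow> neighbours E u \<subseteq> V - {u}"
  unfolding neighbours_def by (auto dest: simple_graph_edgeD[of V E u])

lemma finite_neighbours: "simple_graph V E \<Longrightarrow> finite (neighbours E u)"
  using neighbours_subset by (metis finite_Diff finite_subset simple_graph_def)

lemma proper_edge_colouring_adjacent:
  assumes "proper_edge_colouring E c k" "{a, b} \<in> E" "{b, w} \<in> E" "a \<noteq> w"
  shows "c {a, b} \<noteq> c {b, w}"
proof -
  have "{a, b} \<noteq> {b, w}" "{a, b} \<inter> {b, w} \<noteq> {}"
    using assms(4) by (auto simp: doubleton_eq_iff)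
  with assms(1-3) show ?thesis
    unfolding proper_edge_colouring_def by (meson Ball_def)
qed

lemma proper_edge_colouring_inj_on_neighbours:
  assumes "proper_edge_colouring E c k"
  shows "inj_on (\<lambda>w. c {u, w}) (neighbours E u)"
proof (rule inj_onI)
  fix a b assume "a \<in> neighbours E u" "b \<in> neighbours E u" "c {u, a} = c {u, b}"
  then have "{a, u} \<in> E" "{u, b} \<in> E" "c {a, u} = c {u, b}"
    by (simp_all add: neighbours_def insert_commute)
  then show "a = b" using proper_edge_colouring_adjacent[OF assms] by blast
qed

lemma neighbourhoods_partition:
  assumes simple: "simple_graph V E" and "u \<in> V" "v \<in> V" "u \<noteq> v" "{u, v} \<notin> E"
    and disjoint: "neighbours E u \<inter> neighbours E v = {}"
    and degree_sum: "card V - 2 \<le> degree E u + degree E v"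
  shows "neighbours E u \<union> neighbours E v = V - {u, v}"
    and "degree E u + degree E v = card V - 2"
proof -
  have fin: "finite V" using simple by (simp add: simple_graph_def)
  have "v \<notin> neighbours E u" "u \<notin> neighbours E v"
    using assms(5) by (simp_all add: neighbours_def insert_commute)
  then have sub: "neighbours E u \<union> neighbours E v \<subseteq> V - {u, v}"
    using neighbours_subset[OF simple, of u] neighbours_subset[OF simple, of v] by blast
  have card_Un: "card (neighbours E u \<union> neighbours E v) = degree E u + degree E v"
    using card_Un_disjoint[OF finite_neighbours finite_neighbours disjoint] simple
    by (simp add: degree_eq_card_neighbours)
  have card_rest: "card (V - {u, v}) = card V - 2"
    using assms(2-4) fin by (simp add: card_Diff_subset)
  have "card (neighbours E u \<union> neighbours E v) \<le> card (V - {u, v})"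
    using sub fin by (simp add: card_mono)
  then show "degree E u + degree E v = card V - 2"
    using card_Un card_rest degree_sum by linarith
  then show "neighbours E u \<union> neighbours E v = V - {u, v}"
    using sub fin card_Un card_rest by (simp add: card_subset_eq)
qed

context
  fixes V :: "'a set" and E :: "'a set set" and c :: "'a set \<Rightarrow> nat" and k :: nat and u v :: 'a
  assumes simple: "simple_graph V E"
    and proper: "proper_edge_colouring E c k"
    and distinct_ends: "u \<noteq> v"
    and rainbow_free: "\<nexists>p. rainbow_path V E c p \<and> hd p = u \<and> last p = v"
begin

private lemmas edgeD = simple_graph_edgeD[OF simple]
private lemmas adjacent = proper_edge_colouring_adjacent[OF proper]
private lemmas rainbow_simps =
  rainbow_path_Cons_Cons rainbow_path_singleton path_edges_Cons_Cons path_edges_singleton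

lemma rainbow_free_not_adjacent: "{u, v} \<notin> E"
proof
  assume "{u, v} \<in> E"
  then have "rainbow_path V E c [u, v]"
    using edgeD by (simp add: rainbow_simps)
  with rainbow_free show False by force
qed

lemma rainbow_free_no_common_neighbour: "{u, w} \<in> E \<Longrightarrow> {w, v} \<notin> E"
proof
  assume uw: "{u, w} \<in> E" and wv: "{w, v} \<in> E"
  then have "rainbow_path V E c [u, w, v]"
    using edgeD[OF uw] edgeD[OF wv] adjacent[OF uw wv distinct_ends] distinct_ends
    by (simp add: rainbow_simps)
  with rainbow_free show False by force
qed

lemma rainbow_free_cross_colour:
  assumes ua: "{u, a} \<in> E" and ab: "{a, b} \<in> E" and bv: "{b, v} \<in> E"
  shows "c {u, a} = c {b, v}"
proof (rule ccontr)
  assume ne: "c {u, a} \<noteq> c {b, v}"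
  have "u \<noteq> b" "a \<noteq> v"
    using rainbow_free_not_adjacent ab bv ua by (auto simp: insert_commute)
  then have "rainbow_path V E c [u, a, b, v]"
    using ua ab bv edgeD[OF ua] edgeD[OF ab] edgeD[OF bv] adjacent[OF ua ab] adjacent[OF ab bv]
      ne distinct_ends
    by (simp add: rainbow_simps)
  with rainbow_free show False by force
qed

lemma rainbow_free_four_path_colour:
  assumes ux: "{u, x} \<in> E" and ua: "{u, a} \<in> E" and ax: "{a, x} \<in> E"
    and xy: "{x, y} \<in> E" and yv: "{y, v} \<in> E"
  shows "c {u, a} = c {x, y}"
proof (rule ccontr)
  assume ne: "c {u, a} \<noteq> c {x, y}"
  have far: "u \<noteq> y" "a \<noteq> y" "a \<noteq> v" "x \<noteq> v"
    using rainbow_free_not_adjacent rainbow_free_no_common_neighbour[OF ua] ux ua yv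
    by (auto simp: insert_commute)
  have yv_colour: "c {y, v} = c {u, x}"
    using rainbow_free_cross_colour[OF ux xy yv] by simp
  have au: "{a, u} \<in> E" and xu: "{x, u} \<in> E"
    using ua ux by (simp_all add: insert_commute)
  have "c {a, u} \<noteq> c {u, x}" "c {a, x} \<noteq> c {x, u}"
    using adjacent[OF au ux] adjacent[OF ax xu] edgeD[OF ax] edgeD[OF au] by simp_all
  then have "rainbow_path V E c [u, a, x, y, v]"
    using ua ax xy yv edgeD[OF ua] edgeD[OF ax] edgeD[OF xy] edgeD[OF yv] edgeD[OF ux]
      far ne distinct_ends
      adjacent[OF ua ax] adjacent[OF ax xy] adjacent[OF xy yv] yv_colour
    by (simp add: rainbow_simps insert_commute)
  with rainbow_free show False by force
qed

lemma rainbow_free_cross_edge: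
  assumes connected: "connected_graph V E" and "u \<in> V" "v \<in> V"
    and partition: "neighbours E u \<union> neighbours E v = V - {u, v}"
  obtains x y where "{u, x} \<in> E" "{x, y} \<in> E" "{y, v} \<in> E"
proof -
  obtain x y where x: "x \<in> insert u (neighbours E u)" and y: "y \<notin> insert u (neighbours E u)"
    and xy: "{x, y} \<in> E"
    using connected_graph_cross_edge[OF connected assms(2,3), of "insert u (neighbours E u)"]
      rainbow_free_not_adjacent distinct_ends by (auto simp: neighbours_def)
  have ux: "{u, x} \<in> E"
    using x y xy by (auto simp: neighbours_def)
  have "y \<noteq> v"
    using rainbow_free_no_common_neighbour[OF ux] xy by auto
  then have "y \<in> neighbours E v"
    using partition y edgeD[OF xy] by blast
  then show ?thesis
    using that ux xy by (simp add: neighbours_def insert_commute)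
qed

lemma rainbow_free_degree_le_3:
  assumes partition: "neighbours E u \<union> neighbours E v = V - {u, v}"
    and ux: "{u, x} \<in> E" and xy: "{x, y} \<in> E" and yv: "{y, v} \<in> E"
  shows "degree E x \<le> 3"
proof -
  have "neighbours E x \<subseteq> {u, y} \<union> ((\<lambda>a. c {u, a}) -` {c {x, y}} \<inter> neighbours E u)"
  proof
    fix w assume "w \<in> neighbours E x"
    then have xw: "{x, w} \<in> E" by (simp add: neighbours_def)
    have "w \<noteq> v" using rainbow_free_no_common_neighbour[OF ux] xw by auto
    then consider "w = u" | "w \<in> neighbours E u" | "w \<in> neighbours E v"
      using partition edgeD[OF xw] by blast
    then show "w \<in> {u, y} \<union> ((\<lambda>a. c {u, a}) -` {c {x, y}} \<inter> neighbours E u)"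
    proof cases
      case 2
      then have "{u, w} \<in> E" "{w, x} \<in> E" using xw by (simp_all add: neighbours_def insert_commute)
      then show ?thesis using rainbow_free_four_path_colour[OF ux _ _ xy yv] 2 by simp
    next
      case 3
      then have "{w, v} \<in> E" by (simp add: neighbours_def insert_commute)
      then have "c {v, w} = c {v, y}"
        using rainbow_free_cross_colour[OF ux xw] rainbow_free_cross_colour[OF ux xy yv]
        by (simp add: insert_commute)
      then have "w = y"
        using inj_onD[OF proper_edge_colouring_inj_on_neighbours[OF proper]] 3 yv
        by (simp add: neighbours_def insert_commute)
      then show ?thesis by simp
    qed simp
  qed
  then have "degree E x \<le> card ({u, y} \<union> ((\<lambda>a. c {u, a}) -` {c {x, y}} \<inter> neighbours E u))"
    unfolding degree_eq_card_neighbours using finite_neighbours[OF simple]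
    by (intro card_mono) simp_all
  also have "\<dots> \<le> card {u, y} + card ((\<lambda>a. c {u, a}) -` {c {x, y}} \<inter> neighbours E u)"
    by (rule card_Un_le)
  also have "\<dots> \<le> 2 + 1"
    using card_vimage_inj_on_le[OF proper_edge_colouring_inj_on_neighbours[OF proper, of u],
        of "{c {x, y}}"]
    by (intro add_mono card_insert_le_m1) simp_all
  finally show ?thesis by simp
qed

end

lemma proper_edge_colouring_rainbow_connected:
  assumes simple: "simple_graph V E" and connected: "connected_graph V E" and large: "card V \<ge> 9"
    and degree_sum: "\<forall>u\<in>V. \<forall>v\<in>V. u \<noteq> v \<and> {u, v} \<notin> E \<longrightarrow> degree E u + degree E v \<ge> card V - 2"
    and proper: "proper_edge_colouring E c k"
  shows "rainbow_connected V E c"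
  unfolding rainbow_connected_def
proof (intro ballI impI)
  fix u v assume u: "u \<in> V" and v: "v \<in> V" and uv: "u \<noteq> v"
  show "\<exists>p. rainbow_path V E c p \<and> hd p = u \<and> last p = v"
  proof (rule ccontr)
    assume rainbow_free: "\<nexists>p. rainbow_path V E c p \<and> hd p = u \<and> last p = v"
    note uv_facts = simple proper uv rainbow_free
    note vu_facts = simple proper uv[symmetric] rainbow_free_sym[OF rainbow_free]
    have non_adjacent: "{u, v} \<notin> E"
      by (rule rainbow_free_not_adjacent[OF uv_facts])
    have "neighbours E u \<inter> neighbours E v = {}"
      using rainbow_free_no_common_neighbour[OF uv_facts]
      by (auto simp: neighbours_def insert_commute)
    then have partition: "neighbours E u \<union> neighbours E v = V - {u, v}"
      and sum_uv: "degree E u + degree E v = card V - 2"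
      using neighbourhoods_partition[OF simple u v uv non_adjacent] degree_sum u v uv non_adjacent
      by auto
    obtain x y where ux: "{u, x} \<in> E" and xy: "{x, y} \<in> E" and yv: "{y, v} \<in> E"
      using rainbow_free_cross_edge[OF uv_facts connected u v partition] .
    have "degree E x \<le> 3"
      by (rule rainbow_free_degree_le_3[OF uv_facts partition ux xy yv])
    moreover have "degree E y \<le> 3"
    proof (rule rainbow_free_degree_le_3[OF vu_facts])
      show "neighbours E v \<union> neighbours E u = V - {v, u}"
        using partition by blast
      show "{v, y} \<in> E" "{y, x} \<in> E" "{x, u} \<in> E"
        using yv xy ux by (simp_all add: insert_commute)
    qed
    moreover have "degree E x + degree E v \<ge> card V - 2" "degree E y + degree E u \<ge> card V - 2"
    proof -
      have "{v, y} \<in> E"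
        using yv by (simp add: insert_commute)
      then have "x \<noteq> v" "{x, v} \<notin> E" "y \<noteq> u" "{y, u} \<notin> E"
        using ux yv non_adjacent rainbow_free_no_common_neighbour[OF uv_facts ux]
          rainbow_free_no_common_neighbour[OF vu_facts] by auto
      then show "degree E x + degree E v \<ge> card V - 2" "degree E y + degree E u \<ge> card V - 2"
        using degree_sum simple_graph_edgeD[OF simple ux] simple_graph_edgeD[OF simple yv] u v
        by blast+
    qed
    ultimately show False using sum_uv large by linarith
  qed
qed

theorem proposition5p11:
  fixes V :: "'a set" and E :: "'a set set"
  assumes "simple_graph V E"
    and "connected_graph V E"
    and "card V \<ge> 9"
    and "\<forall>u\<in>V. \<forall>v\<in>V. u \<noteq> v \<and> {u, v} \<notin> E \<longrightarrow> degree E u + degree E v \<ge> card V - 2"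
  shows "prc V E = chromatic_index V E"
proof -
  have "\<And>k. (\<exists>c. proper_edge_colouring E c k \<and> rainbow_connected V E c) \<longleftrightarrow>
             (\<exists>c. proper_edge_colouring E c k)"
    using proper_edge_colouring_rainbow_connected[OF assms] by blast
  then show ?thesis unfolding prc_def chromatic_index_def by simp
qed

end
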